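(* Let $a,b,c\in\mathbb{R}^n$. Then the set $\{X\in\mathbb{S}^n_+:\ a^\top Xb\ge 0,\ b^\top Xc\ge 0,\ a^\top Xc\ge 0\}$ is rank-one generated.
   Context: $\mathbb{S}^n_+$ is the cone of real symmetric positive semidefinite $n\times n$ matrices. A closed convex cone $\mathcal{S}\subseteq\mathbb{S}^n_+$ is rank-one generated (ROG) if $\mathcal{S}=\mathrm{conv}(\mathcal{S}\cap\{xx^\top:x\in\mathbb{R}^n\})$. *)

theory Defs
  imports "HOL-Analysis.Analysis"
begin

definition psd_cone :: "(real^'n^'n) set" where
  "psd_cone = {X. transpose X = X \<and> (\<forall>x. 0 \<le> x \<bullet> (X *v x))}"

definition outer :: "real^'n \<Rightarrow> real^'n^'n" where
  "outer x = (\<chi> i j. x $ i * x $ j)"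

definition rank_one_generated :: "(real^'n^'n) set \<Rightarrow> bool" where
  "rank_one_generated S \<longleftrightarrow>
     S \<subseteq> psd_cone \<and> closed S \<and> convex_cone S \<and>
     S = convex hull (S \<inter> range outer)"

end

theory Submission
  imports Defs
begin

(* Factor X as a sum of rank-one matrices v_i v_i^T (symmetric Gaussian elimination), so that
  p^T X q is the inner product of the Gram vectors (p . v_i)_i and (q . v_i)_i.  The Gram vectors
  x, y, z of a, b, c have pairwise nonnegative inner products, and three such vectors lie in the
  span of an orthonormal system e_1, e_2, e_3 on which all their coordinates are nonnegative:
  apply Gram-Schmidt starting from a pivot among x, y, z, which exists because the product of the
  three pairwise inner products is bounded via Cauchy-Schwarz.  Pulling the e_k back gives rank-one
  matrices satisfying the three inequalities; by Bessel the remainder is PSD and by Parseval it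
  vanishes on a, b, c, so it is a sum of rank-one matrices w w^T with w orthogonal to a, b, c. *)

lemma inner_orthonormal_sum:
  fixes B :: "'a::real_inner set"
  assumes "finite B" "pairwise orthogonal B" "\<And>e. e \<in> B \<Longrightarrow> norm e = 1" "e \<in> B"
  shows "e \<bullet> (\<Sum>b\<in>B. c b *\<^sub>R b) = c e"
proof -
  have "e \<bullet> b = (if b = e then 1 else 0)" if "b \<in> B" for b
    using assms that by (force simp: norm_eq_1 orthogonal_def pairwise_def)
  then have "e \<bullet> (\<Sum>b\<in>B. c b *\<^sub>R b) = (\<Sum>b\<in>B. if b = e then c e else 0)"
    by (auto simp: inner_sum_right intro: sum.cong)
  then show ?thesis
    using assms(1,4) by simp
qed

lemma Bessel_inequality:
  fixes B :: "'a::real_inner set"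
  assumes "finite B" "pairwise orthogonal B" "\<And>e. e \<in> B \<Longrightarrow> norm e = 1"
  shows "(\<Sum>e\<in>B. (w \<bullet> e)\<^sup>2) \<le> w \<bullet> w"
proof -
  define p where "p = (\<Sum>e\<in>B. (w \<bullet> e) *\<^sub>R e)"
  have "e \<bullet> p = w \<bullet> e" if "e \<in> B" for e
    unfolding p_def using assms that by (rule inner_orthonormal_sum)
  then have "p \<bullet> p = (\<Sum>e\<in>B. (w \<bullet> e)\<^sup>2)"
    by (simp add: p_def inner_sum_left power2_eq_square)
  moreover have "w \<bullet> p = (\<Sum>e\<in>B. (w \<bullet> e)\<^sup>2)"
    by (simp add: p_def inner_sum_right power2_eq_square)
  moreover have "0 \<le> (w - p) \<bullet> (w - p)"
    by simp
  ultimately show ?thesis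
    by (simp add: inner_diff_left inner_diff_right inner_commute[of p w])
qed

lemma Parseval_identity:
  fixes B :: "'a::real_inner set"
  assumes "finite B" "pairwise orthogonal B" "\<And>e. e \<in> B \<Longrightarrow> norm e = 1" "w \<in> span B"
  shows "w \<bullet> w = (\<Sum>e\<in>B. (w \<bullet> e)\<^sup>2)"
proof -
  have "w \<bullet> w = w \<bullet> (\<Sum>e\<in>B. (w \<bullet> e) *\<^sub>R e)"
    using orthonormal_basis_expand[of B w] assms by simp
  then show ?thesis
    by (simp add: inner_sum_right power2_eq_square)
qed

lemma Gram_pivot_real:
  fixes A B C p q r :: real
  assumes "0 \<le> A" "0 \<le> B" "0 \<le> C" "0 \<le> p" "0 \<le> q" "0 \<le> r"
    and "A\<^sup>2 \<le> p * q" "B\<^sup>2 \<le> p * r" "C\<^sup>2 \<le> q * r"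
  shows "A * B \<le> C * p \<or> A * C \<le> B * q \<or> B * C \<le> A * r"
proof (rule ccontr)
  assume "\<not> ?thesis"
  then have h: "C * p < A * B" "B * q < A * C" "A * r < B * C"
    by auto
  have "(C * p) * (B * q) < (A * B) * (A * C)"
    by (rule mult_strict_mono'[OF h(1,2)]) (use assms in auto)
  then have "(C * p) * (B * q) * (A * r) < (A * B) * (A * C) * (B * C)"
    by (rule mult_strict_mono'[OF _ h(3)]) (use assms in auto)
  then have lt: "(A * B * C) * (p * q * r) < (A * B * C)\<^sup>2"
    by (simp add: power2_eq_square mult_ac)
  have "(A * B * C)\<^sup>2 = A\<^sup>2 * B\<^sup>2 * C\<^sup>2"
    by (simp add: power_mult_distrib)
  also have "\<dots> \<le> (p * q) * (p * r) * (q * r)"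
    by (rule mult_mono[OF mult_mono[OF assms(7,8)] assms(9)]) (use assms in auto)
  also have "\<dots> = (p * q * r)\<^sup>2"
    by (simp add: power2_eq_square mult_ac)
  finally have "A * B * C \<le> p * q * r"
    by (rule power2_le_imp_le) (use assms in simp)
  then have "(A * B * C)\<^sup>2 \<le> (A * B * C) * (p * q * r)"
    unfolding power2_eq_square by (rule mult_left_mono) (use assms in simp)
  with lt show False
    by simp
qed

lemma Gram_pivot:
  fixes x y z :: "'a::real_inner"
  assumes "0 \<le> x \<bullet> y" "0 \<le> x \<bullet> z" "0 \<le> y \<bullet> z"
  shows "(x \<bullet> y) * (x \<bullet> z) \<le> (y \<bullet> z) * (x \<bullet> x) \<or>
         (y \<bullet> x) * (y \<bullet> z) \<le> (x \<bullet> z) * (y \<bullet> y) \<or>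
         (z \<bullet> x) * (z \<bullet> y) \<le> (x \<bullet> y) * (z \<bullet> z)"
  unfolding inner_commute[of y x] inner_commute[of z x] inner_commute[of z y]
  by (rule Gram_pivot_real[OF assms inner_ge_zero inner_ge_zero inner_ge_zero
      Cauchy_Schwarz_ineq Cauchy_Schwarz_ineq Cauchy_Schwarz_ineq])

lemma nonneg_orthonormal_frame_pivot:
  fixes x y z :: "'a::real_inner"
  assumes xy: "0 \<le> x \<bullet> y" and xz: "0 \<le> x \<bullet> z" and yz: "0 \<le> y \<bullet> z"
    and pivot: "(x \<bullet> y) * (x \<bullet> z) \<le> (y \<bullet> z) * (x \<bullet> x)"
  obtains B where "finite B" "pairwise orthogonal B" "\<And>e. e \<in> B \<Longrightarrow> norm e = 1"
    "{x, y, z} \<subseteq> span B" "\<And>v e. v \<in> {x, y, z} \<Longrightarrow> e \<in> B \<Longrightarrow> 0 \<le> v \<bullet> e"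
proof -
  have orth: "u \<bullet> (w - (w \<bullet> u / (u \<bullet> u)) *\<^sub>R u) = 0" for u w :: 'a
    by (cases "u = 0") (simp_all add: inner_diff_right inner_commute)
  \<comment> \<open>Gram-Schmidt; for \<open>x = 0\<close> the quotients are \<open>0 / 0 = 0\<close>, so \<open>f2 = y\<close>\<close>
  define f2 where "f2 = y - (y \<bullet> x / (x \<bullet> x)) *\<^sub>R x"
  define f3 where "f3 = (z - (z \<bullet> x / (x \<bullet> x)) *\<^sub>R x) - (z \<bullet> f2 / (f2 \<bullet> f2)) *\<^sub>R f2"
  have x_f2: "x \<bullet> f2 = 0"
    unfolding f2_def by (rule orth)
  have x_f3: "x \<bullet> f3 = 0" and f2_f3: "f2 \<bullet> f3 = 0"
    using orth[of x z] orth[of f2 z] x_f2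
    by (simp_all add: f3_def inner_diff_right inner_commute[of f2 x])
  define B where "B = sgn ` ({x, f2, f3} - {0})"
  have "pairwise orthogonal {x, f2, f3}"
    using x_f2 x_f3 f2_f3 by (auto simp: pairwise_insert orthogonal_def inner_commute)
  then have B_orth: "pairwise orthogonal B"
    by (auto simp: B_def pairwise_def orthogonal_def sgn_div_norm)
  have B_norm: "norm e = 1" if "e \<in> B" for e
    using that by (auto simp: B_def norm_sgn split: if_splits)
  have f_span: "f \<in> span B" if "f \<in> {x, f2, f3}" for f
  proof (cases "f = 0")
    case False
    then have "f = norm f *\<^sub>R sgn f" and "sgn f \<in> B"
      using that by (auto simp: sgn_div_norm B_def)
    then show ?thesis
      by (metis span_base span_mul)
  qed (simp add: span_zero)
  have y_eq: "y = f2 + (y \<bullet> x / (x \<bullet> x)) *\<^sub>R x"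
    by (simp add: f2_def)
  have z_eq: "z = f3 + (z \<bullet> x / (x \<bullet> x)) *\<^sub>R x + (z \<bullet> f2 / (f2 \<bullet> f2)) *\<^sub>R f2"
    by (simp add: f3_def)
  have "y \<in> span B"
    by (subst y_eq) (intro span_add span_mul f_span; simp)
  moreover have "z \<in> span B"
    by (subst z_eq) (intro span_add span_mul f_span; simp)
  ultimately have span_xyz: "{x, y, z} \<subseteq> span B"
    using f_span by simp
  \<comment> \<open>the only coordinate whose sign is not automatic: here the pivot condition is needed\<close>
  have "0 \<le> z \<bullet> f2"
  proof (cases "x = 0")
    case False
    then have "z \<bullet> f2 = ((y \<bullet> z) * (x \<bullet> x) - (x \<bullet> y) * (x \<bullet> z)) / (x \<bullet> x)"
      by (simp add: f2_def inner_diff_right inner_commute field_simps)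
    then show ?thesis
      using pivot by simp
  qed (use yz in \<open>simp add: f2_def inner_commute\<close>)
  moreover have "y \<bullet> f2 = f2 \<bullet> f2" and "y \<bullet> f3 = 0" and "z \<bullet> f3 = f3 \<bullet> f3"
    using x_f2 x_f3 f2_f3 by (simp_all add: f2_def f3_def inner_diff_left inner_commute)
  ultimately have "0 \<le> v \<bullet> f" if "v \<in> {x, y, z}" "f \<in> {x, f2, f3}" for v f
    using that xy xz x_f2 x_f3 by (auto simp: inner_commute)
  then have B_nonneg: "0 \<le> v \<bullet> e" if "v \<in> {x, y, z}" "e \<in> B" for v e
    using that by (auto simp: B_def sgn_div_norm)
  show ?thesis
    using that[OF _ B_orth B_norm span_xyz B_nonneg] by (simp add: B_def)
qed

lemma nonneg_orthonormal_frame: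
  fixes x y z :: "'a::real_inner"
  assumes xy: "0 \<le> x \<bullet> y" and xz: "0 \<le> x \<bullet> z" and yz: "0 \<le> y \<bullet> z"
  obtains B where "finite B" "pairwise orthogonal B" "\<And>e. e \<in> B \<Longrightarrow> norm e = 1"
    "{x, y, z} \<subseteq> span B" "\<And>v e. v \<in> {x, y, z} \<Longrightarrow> e \<in> B \<Longrightarrow> 0 \<le> v \<bullet> e"
proof -
  have yx: "0 \<le> y \<bullet> x" and zx: "0 \<le> z \<bullet> x" and zy: "0 \<le> z \<bullet> y"
    using assms by (simp_all add: inner_commute)
  have "{y, x, z} = {x, y, z}" and "{z, x, y} = {x, y, z}"
    by auto
  with Gram_pivot[OF assms] show ?thesis
    using nonneg_orthonormal_frame_pivot[OF xy xz yz] nonneg_orthonormal_frame_pivot[OF yx yz xz]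
      nonneg_orthonormal_frame_pivot[OF zx zy xy] that
    by metis
qed

lemma convex_cone_hull_sum:
  "(\<And>i. i \<in> I \<Longrightarrow> f i \<in> convex_cone hull S) \<Longrightarrow> (\<Sum>i\<in>I. f i) \<in> convex_cone hull S"
  by (induction I rule: infinite_finite_induct)
     (simp_all add: convex_cone_hull_contains_0 convex_cone_hull_add)

lemma convex_cone_Int: "convex_cone S \<Longrightarrow> convex_cone T \<Longrightarrow> convex_cone (S \<inter> T)"
  using convex_cone_Inter[of "{S, T}"] by auto

lemma convex_cone_convex_hull: "cone A \<Longrightarrow> A \<noteq> {} \<Longrightarrow> convex_cone (convex hull A)"
  using cone_convex_hull[of A] by (auto simp: convex_cone_def cone_def conic_def)

lemma matrix_entry_eq_inner_axis: "M $ i $ j = axis i 1 \<bullet> (M *v axis j (1::real))"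
  by (simp add: matrix_vector_mult_basis inner_axis' column_def)

lemma inner_symmetric_matrix:
  assumes "transpose M = M"
  shows "x \<bullet> (M *v y) = y \<bullet> (M *v (x::real^'n))"
  by (metis assms dot_lmul_matrix inner_commute transpose_matrix_vector)

lemma symmetric_matrix_entry: "transpose M = M \<Longrightarrow> M $ i $ j = M $ j $ i"
  by (metis transpose_def vec_lambda_beta)

lemma outer_mult_vector: "outer u *v y = (u \<bullet> y) *\<^sub>R (u::real^'n)"
  by (simp add: outer_def matrix_vector_mult_def inner_vec_def vec_eq_iff sum_distrib_left mult_ac)

lemma inner_outer: "x \<bullet> (outer u *v y) = (x \<bullet> u) * (u \<bullet> (y::real^'n))"
  by (simp add: outer_mult_vector)

lemma inner_sum_matrix_vector:
  "x \<bullet> ((\<Sum>k\<in>K. M k) *v y) = (\<Sum>k\<in>K. x \<bullet> (M k *v (y::real^'n)))"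
  by (induction K rule: infinite_finite_induct)
     (simp_all add: matrix_vector_mult_add_rdistrib inner_add_right)

lemma inner_sum_outer:
  "x \<bullet> ((\<Sum>i\<in>I. outer (v i)) *v y) = (\<Sum>i\<in>I. (x \<bullet> v i) * (v i \<bullet> (y::real^'n)))"
  by (simp add: inner_sum_matrix_vector inner_outer)

lemma scaleR_outer: "0 \<le> c \<Longrightarrow> c *\<^sub>R outer u = outer (sqrt c *\<^sub>R u)"
  by (simp add: outer_def vec_eq_iff mult_ac)

lemma quadratic_form_add_scaleR:
  assumes "transpose M = M"
  shows "(x + t *\<^sub>R y) \<bullet> (M *v (x + t *\<^sub>R y)) =
     x \<bullet> (M *v x) + 2 * t * (x \<bullet> (M *v y)) + t\<^sup>2 * (y \<bullet> (M *v (y::real^'n)))"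
  using inner_symmetric_matrix[OF assms, of y x]
  by (simp add: power2_eq_square algebra_simps)

lemma linear_inner_matrix_vector: "linear (\<lambda>X::real^'n^'m. p \<bullet> (X *v q))"
  by (rule linearI)
     (simp_all add: matrix_vector_mult_add_rdistrib inner_add_right
       flip: scaleR_matrix_vector_assoc)

lemma continuous_on_inner_matrix_vector: "continuous_on S (\<lambda>X::real^'n^'m. p \<bullet> (X *v q))"
  by (rule linear_continuous_on)
     (simp flip: linear_conv_bounded_linear add: linear_inner_matrix_vector)

lemma psd_coneD:
  assumes "X \<in> psd_cone"
  shows "transpose X = X" and "0 \<le> x \<bullet> (X *v x)"
  using assms by (auto simp: psd_cone_def)

lemma psd_coneI:
  assumes "\<And>x y. x \<bullet> (M *v y) = y \<bullet> (M *v x)" and "\<And>x. 0 \<le> x \<bullet> (M *v x)"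
  shows "M \<in> psd_cone"
proof -
  have "M $ i $ j = M $ j $ i" for i j
    unfolding matrix_entry_eq_inner_axis[of M i j] matrix_entry_eq_inner_axis[of M j i]
    by (rule assms(1))
  then have "transpose M = M"
    by (simp add: vec_eq_iff transpose_def)
  with assms(2) show ?thesis
    by (simp add: psd_cone_def)
qed

lemma psd_cone_iff:
  "X \<in> psd_cone \<longleftrightarrow> (\<forall>x y. x \<bullet> (X *v y) = y \<bullet> (X *v x)) \<and> (\<forall>x. 0 \<le> x \<bullet> (X *v x))"
proof
  assume "X \<in> psd_cone"
  then show "(\<forall>x y. x \<bullet> (X *v y) = y \<bullet> (X *v x)) \<and> (\<forall>x. 0 \<le> x \<bullet> (X *v x))"
    using inner_symmetric_matrix[OF psd_coneD(1)] psd_coneD(2) by blast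
qed (auto intro: psd_coneI)

lemma psd_cone_diagonal_nonneg: "X \<in> psd_cone \<Longrightarrow> 0 \<le> X $ i $ i"
  by (metis psd_coneD(2) matrix_entry_eq_inner_axis)

lemma outer_in_psd_cone: "outer u \<in> psd_cone"
  by (rule psd_coneI) (simp_all add: inner_outer inner_commute)

lemma psd_cone_zero_diagonal:
  assumes X: "X \<in> psd_cone" and "X $ i $ i = 0"
  shows "X $ j $ i = 0" and "X $ i $ j = 0"
proof -
  define r where "r = X $ j $ i"
  have "0 \<le> X $ j $ j + 2 * t * r" for t
    using psd_coneD(2)[OF X, of "axis j 1 + t *\<^sub>R axis i 1"]
    by (simp add: quadratic_form_add_scaleR psd_coneD(1)[OF X] r_def \<open>X $ i $ i = 0\<close>
        flip: matrix_entry_eq_inner_axis)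
  from this[of "- (X $ j $ j + 1) / (2 * r)"] show "X $ j $ i = 0"
    unfolding r_def[symmetric] by (cases "r = 0") (auto simp: field_simps)
  then show "X $ i $ j = 0"
    by (metis X psd_coneD(1) symmetric_matrix_entry)
qed

lemma psd_cone_deflate:
  assumes X: "X \<in> psd_cone" and pos: "0 < X $ d $ d"
  defines "u \<equiv> column d X /\<^sub>R sqrt (X $ d $ d)"
  shows "X - outer u \<in> psd_cone"
    and "outer u $ i $ j = X $ i $ d * X $ j $ d / X $ d $ d"
proof -
  define s where "s = X $ d $ d"
  have sym: "transpose X = X"
    using X by (rule psd_coneD)
  show "outer u $ i $ j = X $ i $ d * X $ j $ d / X $ d $ d" for i j
    using pos by (simp add: u_def outer_def column_def field_simps real_sqrt_mult[symmetric])
  have "x \<bullet> ((X - outer u) *v y) = y \<bullet> ((X - outer u) *v x)" for x y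
    by (simp add: matrix_vector_mult_diff_rdistrib inner_diff_right inner_outer
        inner_symmetric_matrix[OF sym, of x y] inner_commute[of u] mult.commute)
  moreover have "0 \<le> x \<bullet> ((X - outer u) *v x)" for x
  proof -
    define r where "r = x \<bullet> (X *v axis d 1)"
    have "x \<bullet> u = r / sqrt s"
      by (simp add: u_def r_def s_def matrix_vector_mult_basis divide_inverse_commute)
    then have "x \<bullet> ((X - outer u) *v x) = x \<bullet> (X *v x) - r\<^sup>2 / s"
      using pos by (simp add: matrix_vector_mult_diff_rdistrib inner_diff_right inner_outer
          inner_commute[of u] power_divide s_def power2_eq_square)
    also have "\<dots> = (x - (r / s) *\<^sub>R axis d 1) \<bullet> (X *v (x - (r / s) *\<^sub>R axis d 1))"
      \<comment> \<open>completing the square in the direction of the d-th basis vector\<close>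
      using quadratic_form_add_scaleR[OF sym, of x "- r / s" "axis d 1"] pos
      by (simp add: r_def s_def flip: matrix_entry_eq_inner_axis)
         (simp add: field_simps power2_eq_square)
    also have "\<dots> \<ge> 0"
      using X by (rule psd_coneD)
    finally show ?thesis .
  qed
  ultimately show "X - outer u \<in> psd_cone"
    by (rule psd_coneI)
qed

lemma psd_cone_sum_outer_on:
  fixes X :: "real^'n^'n"
  assumes "finite D" "X \<in> psd_cone" "\<And>i. i \<notin> D \<Longrightarrow> X $ i $ i = 0"
  shows "\<exists>v. X = (\<Sum>i\<in>D. outer (v i))"
  using assms
proof (induction D arbitrary: X rule: finite_induct)
  case empty
  then have "X $ i $ i = 0" for i
    by simp
  then have "X $ i $ j = 0" for i j
    using psd_cone_zero_diagonal(2)[OF empty.prems(1)] by blast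
  then have "X = 0"
    by (simp add: vec_eq_iff)
  then show ?case
    by simp
next
  case (insert d D)
  have sum_upd: "(\<Sum>i\<in>insert d D. outer ((v(d := w)) i)) = outer w + (\<Sum>i\<in>D. outer (v i))"
    for v :: "'n \<Rightarrow> real^'n" and w
  proof -
    have "(\<Sum>i\<in>D. outer ((v(d := w)) i)) = (\<Sum>i\<in>D. outer (v i))"
      using insert.hyps(2) by (intro sum.cong) auto
    then show ?thesis
      using insert.hyps by simp
  qed
  show ?case
  proof (cases "X $ d $ d = 0")
    case True
    have "X $ i $ i = 0" if "i \<notin> D" for i
      using True insert.prems(2) that by (cases "i = d") auto
    then obtain v where "X = (\<Sum>i\<in>D. outer (v i))"
      using insert.IH insert.prems(1) by blast
    then have "X = (\<Sum>i\<in>insert d D. outer ((v(d := 0)) i))"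
      unfolding sum_upd by (simp add: outer_def vec_eq_iff)
    then show ?thesis
      by blast
  next
    case False
    then have pos: "0 < X $ d $ d"
      using psd_cone_diagonal_nonneg[OF insert.prems(1), of d] by linarith
    define u where "u = column d X /\<^sub>R sqrt (X $ d $ d)"
    have "X - outer u \<in> psd_cone"
      unfolding u_def using insert.prems(1) pos by (rule psd_cone_deflate)
    moreover have "(X - outer u) $ i $ i = 0" if "i \<notin> D" for i
    proof (cases "i = d")
      case True
      then show ?thesis
        using pos by (simp add: u_def psd_cone_deflate(2)[OF insert.prems(1) pos])
    next
      case False
      then have "X $ i $ i = 0"
        using insert.prems(2) that by simp
      then show ?thesis
        using psd_cone_zero_diagonal(2)[OF insert.prems(1), of i d]
        by (simp add: u_def psd_cone_deflate(2)[OF insert.prems(1) pos])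
    qed
    ultimately obtain v where "X - outer u = (\<Sum>i\<in>D. outer (v i))"
      using insert.IH by blast
    then have "X = (\<Sum>i\<in>insert d D. outer ((v(d := u)) i))"
      unfolding sum_upd by (simp add: algebra_simps)
    then show ?thesis
      by blast
  qed
qed

lemma psd_cone_sum_outer:
  fixes X :: "real^'n^'n"
  assumes "X \<in> psd_cone"
  obtains v :: "'n \<Rightarrow> real^'n" where "X = (\<Sum>i\<in>UNIV. outer (v i))"
  using psd_cone_sum_outer_on[of UNIV X] assms by auto

lemma closed_psd_cone: "closed psd_cone"
proof -
  have "psd_cone = {X. (\<forall>x y. x \<bullet> (X *v y) = y \<bullet> (X *v x)) \<and> (\<forall>x. 0 \<le> x \<bullet> (X *v x))}"
    by (auto simp: psd_cone_iff)
  also have "closed \<dots>"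
    by (intro closed_Collect_conj closed_Collect_all closed_Collect_eq closed_Collect_le
        continuous_on_inner_matrix_vector continuous_on_const)
  finally show ?thesis .
qed

lemma convex_cone_psd_cone: "convex_cone psd_cone"
  by (auto simp: convex_cone_iff psd_cone_iff matrix_vector_mult_add_rdistrib inner_add_right
      simp flip: scaleR_matrix_vector_assoc)

lemma closed_bilinear_halfspace: "closed {X::real^'n^'m. 0 \<le> p \<bullet> (X *v q)}"
  by (intro closed_Collect_le continuous_on_inner_matrix_vector continuous_on_const)

lemma convex_cone_bilinear_halfspace: "convex_cone {X::real^'n^'m. 0 \<le> p \<bullet> (X *v q)}"
  by (auto simp: convex_cone_iff matrix_vector_mult_add_rdistrib inner_add_right
      simp flip: scaleR_matrix_vector_assoc)

lemma psd_cone_isotropic_in_convex_cone_hull: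
  fixes Y :: "real^'n^'n"
  assumes "Y \<in> psd_cone" and "\<And>p. p \<in> P \<Longrightarrow> p \<bullet> (Y *v p) = 0"
  shows "Y \<in> convex_cone hull (outer ` {u. \<forall>p\<in>P. p \<bullet> u = 0})"
proof -
  obtain y :: "'n \<Rightarrow> real^'n" where y: "Y = (\<Sum>i\<in>UNIV. outer (y i))"
    using psd_cone_sum_outer[OF assms(1)] .
  have "p \<bullet> y i = 0" if "p \<in> P" for p i
  proof -
    have "(\<Sum>i\<in>UNIV. (p \<bullet> y i)\<^sup>2) = 0"
      using assms(2)[OF that]
      by (simp add: y inner_sum_outer inner_commute[of "y _" p] power2_eq_square)
    then show ?thesis
      by (simp add: sum_nonneg_eq_0_iff)
  qed
  then show ?thesis
    unfolding y by (intro convex_cone_hull_sum hull_inc) auto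
qed

lemma psd_cone_nonneg_in_convex_cone_hull:
  fixes a b c :: "real^'n"
  assumes X: "X \<in> psd_cone"
    and ab: "0 \<le> a \<bullet> (X *v b)" and bc: "0 \<le> b \<bullet> (X *v c)" and ac: "0 \<le> a \<bullet> (X *v c)"
  shows "X \<in> convex_cone hull (outer ` {u. 0 \<le> a \<bullet> u \<and> 0 \<le> b \<bullet> u \<and> 0 \<le> c \<bullet> u})"
    (is "X \<in> ?H")
proof -
  obtain v :: "'n \<Rightarrow> real^'n" where v: "X = (\<Sum>i\<in>UNIV. outer (v i))"
    using psd_cone_sum_outer[OF X] .
  \<comment> \<open>with \<open>V\<close> the matrix with columns \<open>v i\<close>: \<open>coord p = V\<^sup>T p\<close> and \<open>W e = V e\<close>\<close>
  define coord where "coord p = (\<chi> i. p \<bullet> v i)" for p :: "real^'n"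
  define W where "W e = (\<Sum>i\<in>UNIV. e $ i *\<^sub>R v i)" for e :: "real^'n"
  have gram: "p \<bullet> (X *v q) = coord p \<bullet> coord q" for p q
    unfolding v inner_sum_outer inner_vec_def[of "coord p"]
    by (simp add: coord_def inner_commute[of "v _" q])
  have coord_W: "p \<bullet> W e = coord p \<bullet> e" for p e
    unfolding W_def inner_sum_right inner_scaleR_right inner_vec_def[of "coord p"]
    by (simp add: coord_def mult.commute)
  obtain B where B: "finite B" "pairwise orthogonal B" "\<And>e. e \<in> B \<Longrightarrow> norm e = 1"
    and span: "{coord a, coord b, coord c} \<subseteq> span B"
    and nonneg: "\<And>p e. p \<in> {coord a, coord b, coord c} \<Longrightarrow> e \<in> B \<Longrightarrow> 0 \<le> p \<bullet> e"
    using nonneg_orthonormal_frame[of "coord a" "coord b" "coord c"] ab bc ac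
    unfolding gram by blast
  define Y where "Y = X - (\<Sum>e\<in>B. outer (W e))"
  have Y_form:
    "p \<bullet> (Y *v q) = coord p \<bullet> coord q - (\<Sum>e\<in>B. (coord p \<bullet> e) * (coord q \<bullet> e))" for p q
    by (simp add: Y_def matrix_vector_mult_diff_rdistrib inner_diff_right gram inner_sum_outer
        coord_W inner_commute[of "W _" q])
  have "Y \<in> psd_cone"
  proof (rule psd_coneI)
    show "p \<bullet> (Y *v q) = q \<bullet> (Y *v p)" for p q
      by (simp add: Y_form inner_commute mult.commute)
    show "0 \<le> p \<bullet> (Y *v p)" for p
      using Bessel_inequality[OF B, of "coord p"] by (simp add: Y_form power2_eq_square)
  qed
  moreover have "p \<bullet> (Y *v p) = 0" if "p \<in> {a, b, c}" for p
    using Parseval_identity[OF B, of "coord p"] span that by (auto simp: Y_form power2_eq_square)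
  ultimately have "Y \<in> convex_cone hull (outer ` {u. \<forall>p\<in>{a, b, c}. p \<bullet> u = 0})"
    by (rule psd_cone_isotropic_in_convex_cone_hull)
  also have "\<dots> \<subseteq> ?H"
    by (intro hull_mono image_mono) auto
  finally have "Y \<in> ?H" .
  moreover have "outer (W e) \<in> ?H" if "e \<in> B" for e
    using nonneg[of _ e] that by (intro hull_inc) (auto simp: coord_W)
  ultimately have "(\<Sum>e\<in>B. outer (W e)) + Y \<in> ?H"
    by (intro convex_cone_hull_add convex_cone_hull_sum)
  then show ?thesis
    by (simp add: Y_def)
qed

theorem theorem3p7:
  fixes a b c :: "real^'n"
  shows "rank_one_generated
           {X \<in> psd_cone. 0 \<le> a \<bullet> (X *v b) \<and> 0 \<le> b \<bullet> (X *v c) \<and> 0 \<le> a \<bullet> (X *v c)}"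
  (is "rank_one_generated ?S")
proof -
  have S_eq: "?S = psd_cone \<inter> {X. 0 \<le> a \<bullet> (X *v b)} \<inter> {X. 0 \<le> b \<bullet> (X *v c)}
      \<inter> {X. 0 \<le> a \<bullet> (X *v c)}"
    by auto
  have cone: "convex_cone ?S" and closed: "closed ?S"
    unfolding S_eq
    by (intro convex_cone_Int convex_cone_psd_cone convex_cone_bilinear_halfspace
        closed_Int closed_psd_cone closed_bilinear_halfspace)+
  let ?R = "?S \<inter> range outer"
  have "cone ?R"
    using cone by (auto simp: cone_def convex_cone_iff scaleR_outer)
  moreover have "outer 0 \<in> ?R"
    by (simp add: outer_in_psd_cone inner_outer)
  ultimately have "convex_cone (convex hull ?R)"
    by (intro convex_cone_convex_hull) auto
  then have "convex_cone hull (outer ` {u. 0 \<le> a \<bullet> u \<and> 0 \<le> b \<bullet> u \<and> 0 \<le> c \<bullet> u})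
      \<subseteq> convex hull ?R"
    by (intro hull_minimal) (auto simp: outer_in_psd_cone inner_outer inner_commute intro: hull_inc)
  then have "?S \<subseteq> convex hull ?R"
    using psd_cone_nonneg_in_convex_cone_hull by blast
  moreover have "convex hull ?R \<subseteq> ?S"
    using cone by (intro hull_minimal) (auto simp: convex_cone_def)
  ultimately show ?thesis
    using cone closed by (auto simp: rank_one_generated_def)
qed

end
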